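(* The line graph $L(K_{s,s})$ of the complete bipartite graph $K_{s,s}$ with $s>2$, the Petersen graph, and the Clebsch graph are not $\mathcal{C}$-$\mathrm{MH}$.
   Context: Subgraphs are induced. A homomorphism maps edges to edges; a monomorphism is an injective homomorphism. A graph $G$ is $\mathcal{C}$-$\mathrm{MH}$ if every monomorphism from a finite connected induced subgraph of $G$ into $G$ extends to a homomorphism $G\to G$. $L(K_{s,s})$ has vertex set $\{1,\dots,s\}^2$ with $(u,i)\sim(v,j)$ iff exactly one of $u=v$, $i=j$ holds (distinct vertices sharing a coordinate). The Petersen graph has as vertices the $2$-element subsets of $\{1,\dots,5\}$, adjacent iff disjoint. The Clebsch graph is the graph obtained from the $5$-dimensional cube $Q_5$ by identifying antipodal vertices. *)

theory Defs
  imports Main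
begin

text \<open>A graph is given by a vertex set V and a symmetric adjacency relation E.
  Subgraphs are induced, so a subgraph is determined by a vertex subset S of V.\<close>

definition connected_on :: "('a \<Rightarrow> 'a \<Rightarrow> bool) \<Rightarrow> 'a set \<Rightarrow> bool" where
  "connected_on E S \<longleftrightarrow> S \<noteq> {} \<and>
     (\<forall>x\<in>S. \<forall>y\<in>S. (\<lambda>a b. a \<in> S \<and> b \<in> S \<and> E a b)\<^sup>*\<^sup>* x y)"

definition is_hom :: "'a set \<Rightarrow> ('a \<Rightarrow> 'a \<Rightarrow> bool) \<Rightarrow> 'a set \<Rightarrow> ('a \<Rightarrow> 'a) \<Rightarrow> bool" where
  "is_hom V E S f \<longleftrightarrow> (\<forall>x\<in>S. f x \<in> V) \<and> (\<forall>x\<in>S. \<forall>y\<in>S. E x y \<longrightarrow> E (f x) (f y))"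

definition is_mono :: "'a set \<Rightarrow> ('a \<Rightarrow> 'a \<Rightarrow> bool) \<Rightarrow> 'a set \<Rightarrow> ('a \<Rightarrow> 'a) \<Rightarrow> bool" where
  "is_mono V E S f \<longleftrightarrow> is_hom V E S f \<and> inj_on f S"

definition C_MH :: "'a set \<Rightarrow> ('a \<Rightarrow> 'a \<Rightarrow> bool) \<Rightarrow> bool" where
  "C_MH V E \<longleftrightarrow> (\<forall>S f. S \<subseteq> V \<and> finite S \<and> connected_on E S \<and> is_mono V E S f \<longrightarrow>
     (\<exists>g. is_hom V E V g \<and> (\<forall>x\<in>S. g x = f x)))"

definition LK_verts :: "nat \<Rightarrow> (nat \<times> nat) set" where
  "LK_verts s = {1..s} \<times> {1..s}"

definition LK_adj :: "nat \<times> nat \<Rightarrow> nat \<times> nat \<Rightarrow> bool" where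
  "LK_adj p q \<longleftrightarrow> ((fst p = fst q) \<noteq> (snd p = snd q))"

definition petersen_verts :: "nat set set" where
  "petersen_verts = {A. A \<subseteq> {1..5} \<and> card A = 2}"

definition petersen_adj :: "nat set \<Rightarrow> nat set \<Rightarrow> bool" where
  "petersen_adj A B \<longleftrightarrow> A \<inter> B = {}"

text \<open>Clebsch graph: Q_5 (vertices = subsets of {0..4}, adjacent iff symmetric
  difference has one element) with antipodal vertices A, {0..4}-A identified.\<close>
definition Q5_adj :: "nat set \<Rightarrow> nat set \<Rightarrow> bool" where
  "Q5_adj A B \<longleftrightarrow> card ((A - B) \<union> (B - A)) = 1"

definition clebsch_verts :: "nat set set set" where
  "clebsch_verts = {{A, {0..4} - A} | A. A \<subseteq> {0..4}}"

definition clebsch_adj :: "nat set set \<Rightarrow> nat set set \<Rightarrow> bool" where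
  "clebsch_adj X Y \<longleftrightarrow> (\<exists>A\<in>X. \<exists>B\<in>Y. Q5_adj A B)"

end

theory Submission
  imports Defs
begin

text \<open>In each of the three graphs we exhibit a connected induced path S, a vertex v outside S
  with neighbours x, y (and z) on S, and a monomorphism f of S into the graph that sends these
  neighbours to vertices without a common neighbour. An extension g of f would map v to such a
  common neighbour. In the Petersen and Clebsch graphs, which are triangle-free, f bends an
  induced path whose endpoints lie at distance 2 into a 5-cycle resp. 4-cycle, making the images
  of the endpoints adjacent. In \<open>L(K\<^sub>s\<^sub>,\<^sub>s)\<close> the vertices (1,2), (2,1), (1,3) have the common
  neighbour (1,1), while their images (1,1), (2,1), (1,2) have none.\<close>

lemma walk_reaches_last:
  assumes "successively E xs" "set xs \<subseteq> S" "x \<in> set xs"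
  shows "(\<lambda>a b. a \<in> S \<and> b \<in> S \<and> E a b)\<^sup>*\<^sup>* x (last xs)"
  using assms
proof (induction E xs arbitrary: x rule: successively.induct)
  case (3 E y z zs)
  let ?R = "\<lambda>a b. a \<in> S \<and> b \<in> S \<and> E a b"
  have step: "?R y z" and rest: "?R\<^sup>*\<^sup>* z (last (z # zs))"
    using 3 by simp_all
  show ?case
  proof (cases "x = y")
    case True
    then show ?thesis using converse_rtranclp_into_rtranclp[OF step rest] by simp
  next
    case False
    then show ?thesis using 3 by simp
  qed
qed simp_all

lemma connected_on_walk:
  assumes "symp E" "successively E xs" "xs \<noteq> []"
  shows "connected_on E (set xs)"
  unfolding connected_on_def
proof (intro conjI ballI)
  let ?R = "\<lambda>a b. a \<in> set xs \<and> b \<in> set xs \<and> E a b"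
  have "symp ?R"
    using \<open>symp E\<close> by (simp add: symp_def)
  then have sym: "symp ?R\<^sup>*\<^sup>*"
    by (rule symp_rtranclp)
  fix x y assume "x \<in> set xs" "y \<in> set xs"
  have "?R\<^sup>*\<^sup>* x (last xs)"
    using walk_reaches_last[OF \<open>successively E xs\<close> order_refl \<open>x \<in> set xs\<close>] .
  moreover have "?R\<^sup>*\<^sup>* (last xs) y"
    using sympD[OF sym walk_reaches_last[OF \<open>successively E xs\<close> order_refl \<open>y \<in> set xs\<close>]] .
  ultimately show "?R\<^sup>*\<^sup>* x y" by (rule rtranclp_trans)
qed (use \<open>xs \<noteq> []\<close> in simp)

lemma not_C_MH_if_common_neighbour_lost:
  assumes "S \<subseteq> V" "finite S" "connected_on E S" "is_mono V E S f"
    and "v \<in> V" "N \<subseteq> S" "\<forall>x\<in>N. E v x"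
    and "\<forall>w\<in>V. \<exists>x\<in>N. \<not> E w (f x)"
  shows "\<not> C_MH V E"
proof
  assume "C_MH V E"
  then obtain g where g: "is_hom V E V g" "\<forall>x\<in>S. g x = f x"
    using assms(1-4) unfolding C_MH_def by blast
  have "g v \<in> V"
    using g(1) \<open>v \<in> V\<close> unfolding is_hom_def by blast
  moreover have "E (g v) (f x)" if "x \<in> N" for x
  proof -
    have "x \<in> S" "x \<in> V" using that assms(1,6) by auto
    then have "E (g v) (g x)"
      using g(1) \<open>v \<in> V\<close> assms(7) that unfolding is_hom_def by blast
    then show ?thesis using g(2) \<open>x \<in> S\<close> by simp
  qed
  ultimately show False using assms(8) by blast
qed

lemma LK_no_common_neighbour:
  assumes "a \<noteq> a'" "b \<noteq> b'"
  shows "\<not> (LK_adj w (a, b) \<and> LK_adj w (a', b) \<and> LK_adj w (a, b'))"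
  using assms by (cases w) (auto simp: LK_adj_def)

lemma LK_not_C_MH:
  assumes "s > 2"
  shows "\<not> C_MH (LK_verts s) LK_adj"
proof -
  define xs :: "(nat \<times> nat) list" where "xs = [(2,1), (2,2), (1,2), (1,3)]"
  define f :: "nat \<times> nat \<Rightarrow> nat \<times> nat" where
    "f p = (if p = (2,1) then (2,1) else if p = (2,2) then (3,1) else if p = (1,2) then (1,1) else (1,2))"
    for p
  have "connected_on LK_adj (set xs)"
    by (rule connected_on_walk) (auto simp: xs_def symp_def LK_adj_def)
  moreover have "is_mono (LK_verts s) LK_adj (set xs) f"
    using assms by (auto simp: is_mono_def is_hom_def xs_def f_def LK_verts_def LK_adj_def inj_on_def)
  moreover have "\<forall>w. \<exists>x\<in>{(1,2), (2,1), (1,3)}. \<not> LK_adj w (f x)"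
    using LK_no_common_neighbour[of 1 2 1 2] by (auto simp: f_def)
  ultimately show ?thesis
    using assms
    by (intro not_C_MH_if_common_neighbour_lost[where S = "set xs" and v = "(1,1)" and N = "{(1,2), (2,1), (1,3)}"])
      (auto simp: xs_def LK_verts_def LK_adj_def)
qed

lemma petersen_triangle_free:
  assumes "A \<in> petersen_verts" "B \<in> petersen_verts" "C \<in> petersen_verts"
    and "petersen_adj A B" "petersen_adj B C" "petersen_adj A C"
  shows False
proof -
  have fin: "finite A" "finite B" "finite C" and card: "card A = 2" "card B = 2" "card C = 2"
    using assms(1-3) by (auto simp: petersen_verts_def intro: finite_subset)
  have "card (A \<union> B \<union> C) = 6"
    using assms(4-6) fin card by (simp add: card_Un_disjoint petersen_adj_def Int_Un_distrib2)
  moreover have "card (A \<union> B \<union> C) \<le> card {1..5::nat}"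
    using assms(1-3) by (intro card_mono) (auto simp: petersen_verts_def)
  ultimately show False by simp
qed

lemma petersen_not_C_MH: "\<not> C_MH petersen_verts petersen_adj"
proof -
  define xs :: "nat set list" where "xs = [{3,4}, {1,5}, {2,3}, {1,4}, {3,5}]"
  define f :: "nat set \<Rightarrow> nat set" where
    "f X = (if X = {3,4} then {1,2} else if X = {1,5} then {3,4} else if X = {2,3} then {1,5}
      else if X = {1,4} then {2,3} else {4,5})" for X
  have "connected_on petersen_adj (set xs)"
    by (rule connected_on_walk) (auto simp: xs_def symp_def petersen_adj_def)
  moreover have "is_mono petersen_verts petersen_adj (set xs) f"
    by (auto simp: is_mono_def is_hom_def xs_def f_def petersen_verts_def petersen_adj_def inj_on_def doubleton_eq_iff)
  moreover have "\<forall>w\<in>petersen_verts. \<exists>x\<in>{{3,4}, {3,5}}. \<not> petersen_adj w (f x)"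
  proof -
    have "f {3,4} = {1,2}" "f {3,5} = {4,5}" "{1,2} \<in> petersen_verts" "{4,5} \<in> petersen_verts"
      "petersen_adj {1,2} {4,5}"
      by (auto simp: f_def doubleton_eq_iff petersen_verts_def petersen_adj_def)
    then show ?thesis using petersen_triangle_free by auto
  qed
  ultimately show ?thesis
    by (intro not_C_MH_if_common_neighbour_lost[where S = "set xs" and v = "{1,2}" and N = "{{3,4}, {3,5}}"])
      (auto simp: xs_def petersen_verts_def petersen_adj_def)
qed

definition clebsch_vertex :: "nat set \<Rightarrow> nat set set" where
  "clebsch_vertex A = {A, {0..4} - A}"

lemma clebsch_vertex_in_verts: "A \<subseteq> {0..4} \<Longrightarrow> clebsch_vertex A \<in> clebsch_verts"
  unfolding clebsch_vertex_def clebsch_verts_def by blast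

lemma clebsch_vertsE:
  assumes "X \<in> clebsch_verts"
  obtains A where "A \<subseteq> {0..4}" "X = clebsch_vertex A"
  using assms unfolding clebsch_verts_def clebsch_vertex_def by blast

lemma clebsch_vertex_eq_iff:
  "A \<subseteq> {0..4} \<Longrightarrow> B \<subseteq> {0..4} \<Longrightarrow>
    clebsch_vertex A = clebsch_vertex B \<longleftrightarrow> A = B \<or> A = {0..4} - B"
  unfolding clebsch_vertex_def by (auto simp: doubleton_eq_iff)

text \<open>Complementing one representative replaces the symmetric difference D by its complement,
  of size 5 - card D; this is where the sizes 1 and 4 come from.\<close>
lemma clebsch_adj_clebsch_vertex:
  assumes "A \<subseteq> {0..4}" "B \<subseteq> {0..4}"
  shows "clebsch_adj (clebsch_vertex A) (clebsch_vertex B) \<longleftrightarrow> card (sym_diff A B) \<in> {1, 4}"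
proof -
  define U :: "nat set" where "U = {0..4}"
  define D where "D = sym_diff A B"
  have "D \<subseteq> U" using assms by (auto simp: D_def U_def)
  then have card_compl: "card (U - D) = 5 - card D" and "card D \<le> 5"
    using card_mono[of U D] by (simp_all add: card_Diff_subset finite_subset U_def)
  have "sym_diff A (U - B) = U - D" "sym_diff (U - A) B = U - D" "sym_diff (U - A) (U - B) = D"
    using assms by (auto simp: D_def U_def)
  then have "clebsch_adj (clebsch_vertex A) (clebsch_vertex B) \<longleftrightarrow> card D = 1 \<or> card (U - D) = 1"
    unfolding clebsch_adj_def clebsch_vertex_def Q5_adj_def U_def[symmetric]
    by (auto simp: D_def)
  also have "\<dots> \<longleftrightarrow> card D \<in> {1, 4}"
    using card_compl \<open>card D \<le> 5\<close> by auto
  finally show ?thesis by (simp add: D_def)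
qed

lemma card_sym_diff:
  assumes "finite D" "finite E"
  shows "card (sym_diff D E) = card D + card E - 2 * card (D \<inter> E)"
proof -
  have "card (D - E) = card D - card (D \<inter> E)" "card (E - D) = card E - card (D \<inter> E)"
    using assms by (simp_all add: card_Diff_subset_Int Int_commute)
  moreover have "card (D \<inter> E) \<le> card D" "card (D \<inter> E) \<le> card E"
    using assms by (simp_all add: card_mono)
  moreover have "card (sym_diff D E) = card (D - E) + card (E - D)"
    using assms by (intro card_Un_disjoint) auto
  ultimately show ?thesis by linarith
qed

text \<open>For representatives A, B, C put D = sym_diff A B, E = sym_diff B C and k = card (D \<inter> E).
  Then sym_diff A C has k' = card D + card E - 2k elements, while card (D \<union> E) \<le> 5 forces
  card D + card E - k \<le> 5; with card D, card E \<in> {1, 4} this leaves k' \<in> {0, 2, 3, 5}.\<close>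
lemma clebsch_triangle_free:
  assumes "X \<in> clebsch_verts" "Y \<in> clebsch_verts" "Z \<in> clebsch_verts"
    and "clebsch_adj X Y" "clebsch_adj Y Z" "clebsch_adj X Z"
  shows False
proof -
  obtain A B C where sub: "A \<subseteq> {0..4}" "B \<subseteq> {0..4}" "C \<subseteq> {0..4}"
    and "X = clebsch_vertex A" "Y = clebsch_vertex B" "Z = clebsch_vertex C"
    using assms(1-3) by (meson clebsch_vertsE)
  define D where "D = sym_diff A B"
  define E where "E = sym_diff B C"
  have adj: "card D \<in> {1, 4}" "card E \<in> {1, 4}" "card (sym_diff A C) \<in> {1, 4}"
    using assms(4-6) sub unfolding D_def E_def \<open>X = _\<close> \<open>Y = _\<close> \<open>Z = _\<close>
    by (simp_all add: clebsch_adj_clebsch_vertex)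
  have fin: "finite D" "finite E"
    using sub by (auto simp: D_def E_def intro: finite_subset)
  have "sym_diff A C = sym_diff D E"
    by (auto simp: D_def E_def)
  then have "card (sym_diff A C) = card D + card E - 2 * card (D \<inter> E)"
    using card_sym_diff[OF fin] by simp
  moreover have "card (D \<union> E) \<le> card {0..4::nat}"
    using sub by (intro card_mono) (auto simp: D_def E_def)
  then have "card D + card E - card (D \<inter> E) \<le> 5"
    using card_Un_Int[OF fin] by simp
  moreover have "card (D \<inter> E) \<le> card D" "card (D \<inter> E) \<le> card E"
    using fin by (simp_all add: card_mono)
  ultimately show False
    using adj by (auto; presburger)
qed

lemma set_neq_if_witness: "\<exists>x. x \<in> A \<and> x \<notin> B \<or> x \<in> B \<and> x \<notin> A \<Longrightarrow> A \<noteq> B"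
  by blast

lemma clebsch_not_C_MH: "\<not> C_MH clebsch_verts clebsch_adj"
proof -
  have U: "{0..4::nat} = {0,1,2,3,4}" by auto
  have distinct: "distinct (map clebsch_vertex [{0,2}, {2,3}, {2}, {}, {0}])"
    \<comment> \<open>the simplifier cannot refute equalities of literal sets of different shapes\<close>
    by (simp add: clebsch_vertex_eq_iff U insert_Diff_if)
      (intro conjI; rule set_neq_if_witness; simp add: conj_disj_distribR ex_disj_distrib)
  define xs where "xs = map clebsch_vertex [{0}, {}, {2}, {2,3}]"
  define f where
    "f X = (if X = clebsch_vertex {0} then clebsch_vertex {} else if X = clebsch_vertex {} then clebsch_vertex {0}
      else if X = clebsch_vertex {2} then clebsch_vertex {0,2} else clebsch_vertex {2})" for X
  have f: "f (clebsch_vertex {0}) = clebsch_vertex {}" "f (clebsch_vertex {}) = clebsch_vertex {0}"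
    "f (clebsch_vertex {2}) = clebsch_vertex {0,2}" "f (clebsch_vertex {2,3}) = clebsch_vertex {2}"
    using distinct by (simp_all add: f_def)
  have "symp clebsch_adj"
    unfolding symp_def clebsch_adj_def Q5_adj_def by (metis Un_commute)
  have "successively clebsch_adj xs"
    by (simp add: xs_def clebsch_adj_clebsch_vertex insert_Diff_if)
  then have "connected_on clebsch_adj (set xs)"
    using \<open>symp clebsch_adj\<close> by (intro connected_on_walk) (simp_all add: xs_def)
  moreover have "is_mono clebsch_verts clebsch_adj (set xs) f"
    unfolding is_mono_def is_hom_def
    using distinct distinct_rev[THEN iffD2, OF distinct]
    by (simp add: xs_def f clebsch_vertex_in_verts clebsch_adj_clebsch_vertex insert_Diff_if)
  moreover have "\<forall>w\<in>clebsch_verts. \<exists>x\<in>{clebsch_vertex {0}, clebsch_vertex {2,3}}. \<not> clebsch_adj w (f x)"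
  proof -
    have "clebsch_vertex {} \<in> clebsch_verts" "clebsch_vertex {2} \<in> clebsch_verts"
      "clebsch_adj (clebsch_vertex {}) (clebsch_vertex {2})"
      by (simp_all add: clebsch_vertex_in_verts clebsch_adj_clebsch_vertex)
    then show ?thesis
      by (simp add: f) (use clebsch_triangle_free in blast)
  qed
  ultimately show ?thesis
    by (intro not_C_MH_if_common_neighbour_lost[where S = "set xs" and v = "clebsch_vertex {0,4}"
          and N = "{clebsch_vertex {0}, clebsch_vertex {2,3}}"])
      (simp_all add: xs_def clebsch_vertex_in_verts clebsch_adj_clebsch_vertex insert_Diff_if)
qed

theorem lemma7p1:
  shows "(\<forall>s::nat. s > 2 \<longrightarrow> \<not> C_MH (LK_verts s) LK_adj)
    \<and> \<not> C_MH petersen_verts petersen_adj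
    \<and> \<not> C_MH clebsch_verts clebsch_adj"
  using LK_not_C_MH petersen_not_C_MH clebsch_not_C_MH by blast

end
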